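(* Let $A\in\mathbb{R}_+^{m\times n}$, $y\in\mathbb{Z}_+^m$, $\beta>0$, and $F(f)=\mathbb{1}^TAf-\sum_{i=1}^m y_i\log(e_i^TAf+\beta)$. Let $\tau>0$ and $\mathrm{pen}:\mathbb{R}^n\to\mathbb{R}$, and set $\rho(f)=\tau\,\mathrm{pen}(f)+\delta_+(f)$, where $\delta_+(f)=0$ if $f\ge 0$ (componentwise) and $\delta_+(f)=+\infty$ otherwise. Assume: (A1) $F$ is proper convex and Lipschitz continuously differentiable on $\mathbb{R}_+^n$; (A2) $\rho$ is proper convex and continuous on $\mathbb{R}_+^n$. Let $\alpha_{\min}>0$. Consider sequences $\{f^k\}\subset\mathbb{R}_+^n$ and $\{\alpha_k\}\subset(0,\infty)$ such that for each $k$, $$f^{k+1}\in\arg\min_{f\in\mathbb{R}^n}\; (f-f^k)^T\nabla F(f^k)+\tfrac{\alpha_k}{2}\|f-f^k\|_2^2+\rho(f).$$ Suppose $\bar f\in\mathbb{R}_+^n$ is not critical for $\min_f F(f)+\rho(f)$, i.e. $0\notin\nabla F(\bar f)+\partial\rho(\bar f)$. Then for any $\bar\alpha\ge\alpha_{\min}$ there exists $\epsilon>0$ such that for any subsequence $\{f^{k_j}\}_{j\in\mathbb{Z}_+}$ with $\lim_{j\to\infty}f^{k_j}=\bar f$, $f^{k_j}\in\mathbb{R}_+^n$ for all $j$, and $\alpha_{\min}\le\alpha_{k_j}\le\bar\alpha$, we have $\|f^{k_j+1}-f^{k_j}\|_2\ge\epsilon$ for all $j$ sufficiently large.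
   Context: $\partial\rho$ denotes the subdifferential (set of subgradients) of the convex function $\rho$. $\mathbb{1}$ is the all-ones vector and $e_i$ the $i$-th canonical basis vector of $\mathbb{R}^m$. *)

theory Defs
  imports "HOL-Analysis.Analysis"
begin

definition nonneg :: "(real ^ 'n) set" where
  "nonneg = {f. \<forall>j. 0 \<le> f $ j}"

definition delta_plus :: "real ^ 'n \<Rightarrow> ereal" where
  "delta_plus f = (if f \<in> nonneg then 0 else \<infinity>)"

definition poissonF :: "real ^ 'n ^ 'm \<Rightarrow> ('m \<Rightarrow> nat) \<Rightarrow> real \<Rightarrow> real ^ 'n \<Rightarrow> real" where
  "poissonF A y \<beta> f =
     (\<Sum>i\<in>UNIV. (A *v f) $ i) - (\<Sum>i\<in>UNIV. real (y i) * ln ((A *v f) $ i + \<beta>))"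

definition subdiff :: "('a::real_inner \<Rightarrow> ereal) \<Rightarrow> 'a \<Rightarrow> 'a set" where
  "subdiff g x = {v. \<forall>z. g z \<ge> g x + ereal (inner v (z - x))}"

definition is_argmin_on_all :: "('a \<Rightarrow> ereal) \<Rightarrow> 'a \<Rightarrow> bool" where
  "is_argmin_on_all \<Phi> x \<longleftrightarrow> (\<forall>z. \<Phi> x \<le> \<Phi> z)"

end

theory Submission
  imports Defs
begin

text \<open>If the limit point were not critical, then passing to the limit in the optimality
  of the proximal-gradient steps along a subsequence with vanishing steps would make
  \<open>fbar\<close> a minimiser of its own model \<open>z \<mapsto> \<langle>z - fbar, \<nabla>F fbar\<rangle> + \<alpha>/2 \<parallel>z - fbar\<parallel>\<^sup>2 + \<rho> z\<close>.
  Since the quadratic term is of second order along segments towards any feasible \<open>z\<close>,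
  convexity of \<open>\<rho>\<close> then shows that \<open>-\<nabla>F fbar\<close> is a subgradient of \<open>\<rho>\<close> at \<open>fbar\<close>.\<close>

lemma convex_nonneg: "convex (nonneg :: (real ^ 'n) set)"
  unfolding convex_def nonneg_def by (auto intro!: add_nonneg_nonneg mult_nonneg_nonneg)

lemma prox_model_minimizer_imp_subgradient:
  fixes P :: "'a::real_inner \<Rightarrow> real"
  assumes "convex S" "convex_on S P" "x \<in> S" "a \<ge> 0"
    and min: "\<And>z. z \<in> S \<Longrightarrow> P x \<le> inner (z - x) G + a / 2 * (norm (z - x))\<^sup>2 + P z"
    and z: "z \<in> S"
  shows "P x + inner (- G) (z - x) \<le> P z"
proof -
  define d where "d = P z - P x + inner (z - x) G"
  define N where "N = (norm (z - x))\<^sup>2"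
  have "0 \<le> d + a / 2 * N * t" if t: "0 < t" "t \<le> 1" for t
  proof -
    have zt: "x + t *\<^sub>R (z - x) \<in> S" "x + t *\<^sub>R (z - x) = (1 - t) *\<^sub>R x + t *\<^sub>R z"
      using convexD[OF \<open>convex S\<close> \<open>x \<in> S\<close> z, of "1 - t" t] t by (auto simp: algebra_simps)
    have "P x \<le> t * inner (z - x) G + a / 2 * t\<^sup>2 * N + P (x + t *\<^sub>R (z - x))"
      using min[OF zt(1)] t by (simp add: N_def power_mult_distrib)
    also have "\<dots> \<le> t * inner (z - x) G + a / 2 * t\<^sup>2 * N + ((1 - t) * P x + t * P z)"
      unfolding zt(2) using convex_onD[OF assms(2), of t x z] assms(3) z t by simp
    finally have "0 \<le> t * (d + a / 2 * N * t)"
      by (simp add: d_def algebra_simps power2_eq_square)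
    thus ?thesis using t by (simp add: zero_le_mult_iff)
  qed
  hence "\<forall>\<^sub>F t in at_right 0. 0 \<le> d + a / 2 * N * t"
    unfolding eventually_at_right[of 0 1, OF zero_less_one] by (intro exI[of _ 1]) auto
  moreover have "((\<lambda>t. d + a / 2 * N * t) \<longlongrightarrow> d) (at_right 0)"
    by (auto intro!: tendsto_eq_intros)
  ultimately have "0 \<le> d"
    by (intro tendsto_le[OF trivial_limit_at_right_real _ tendsto_const]) auto
  thus ?thesis by (simp add: d_def inner_commute)
qed

lemma prox_model_minimizer_limit:
  fixes P :: "'a::real_inner \<Rightarrow> real" and u v g :: "nat \<Rightarrow> 'a"
  assumes P: "continuous_on S P" "x \<in> S" "\<And>n. v n \<in> S"
    and u: "u \<longlonglongrightarrow> x" and v: "v \<longlonglongrightarrow> x" and g: "g \<longlonglongrightarrow> G"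
    and a: "\<And>n. 0 \<le> a n" "\<And>n. a n \<le> b"
    and min: "\<And>n z. z \<in> S \<Longrightarrow> inner (v n - u n) (g n) + a n / 2 * (norm (v n - u n))\<^sup>2 + P (v n)
                      \<le> inner (z - u n) (g n) + a n / 2 * (norm (z - u n))\<^sup>2 + P z"
    and z: "z \<in> S"
  shows "P x \<le> inner (z - x) G + b / 2 * (norm (z - x))\<^sup>2 + P z"
proof -
  have le: "inner (v n - u n) (g n) + P (v n) \<le> inner (z - u n) (g n) + b / 2 * (norm (z - u n))\<^sup>2 + P z"
    for n
  proof -
    have "a n / 2 * (norm (z - u n))\<^sup>2 \<le> b / 2 * (norm (z - u n))\<^sup>2"
      using a(2) by (intro mult_right_mono) auto
    moreover have "0 \<le> a n / 2 * (norm (v n - u n))\<^sup>2"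
      using a(1) by simp
    ultimately show ?thesis using min[OF z, of n] by linarith
  qed
  have "(\<lambda>n. P (v n)) \<longlonglongrightarrow> P x"
    by (rule continuous_on_tendsto_compose[OF P(1) v P(2)]) (use P(3) in auto)
  hence "(\<lambda>n. inner (v n - u n) (g n) + P (v n)) \<longlonglongrightarrow> inner (x - x) G + P x"
    by (intro tendsto_intros u v g)
  moreover have "(\<lambda>n. inner (z - u n) (g n) + b / 2 * (norm (z - u n))\<^sup>2 + P z)
      \<longlonglongrightarrow> inner (z - x) G + b / 2 * (norm (z - x))\<^sup>2 + P z"
    by (intro tendsto_intros u g)
  ultimately show ?thesis using LIMSEQ_le le by fastforce
qed

lemma argmin_model_plus_delta_plus_le:
  assumes "is_argmin_on_all (\<lambda>x. ereal (q x) + (ereal (P x) + delta_plus x)) w"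
    and "w \<in> nonneg" "z \<in> nonneg"
  shows "q w + P w \<le> q z + P z"
proof -
  have "ereal (q w) + (ereal (P w) + delta_plus w) \<le> ereal (q z) + (ereal (P z) + delta_plus z)"
    using assms(1) unfolding is_argmin_on_all_def by blast
  thus ?thesis using assms(2,3) by (simp add: delta_plus_def)
qed

lemma subdiff_plus_delta_plusI:
  assumes "x \<in> nonneg" "\<And>z. z \<in> nonneg \<Longrightarrow> P x + inner v (z - x) \<le> P z"
  shows "v \<in> subdiff (\<lambda>x. ereal (P x) + delta_plus x) x"
  using assms unfolding subdiff_def delta_plus_def by auto

lemma subseq_with_vanishing_steps:
  fixes f :: "nat \<Rightarrow> 'a::real_normed_vector"
  assumes "\<And>e. e > 0 \<Longrightarrow> \<exists>kj. (\<lambda>j. f (kj j)) \<longlonglongrightarrow> x \<and> (\<forall>j. Q (kj j)) \<and>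
            \<not> (\<forall>\<^sub>F j in sequentially. e \<le> norm (f (Suc (kj j)) - f (kj j)))"
  obtains K where "(\<lambda>n. f (K n)) \<longlonglongrightarrow> x" "(\<lambda>n. f (Suc (K n))) \<longlonglongrightarrow> x" "\<And>n. Q (K n)"
proof -
  have "\<exists>k. norm (f k - x) < inverse (Suc n) \<and> norm (f (Suc k) - f k) < inverse (Suc n) \<and> Q k" for n
  proof -
    obtain kj where lim: "(\<lambda>j. f (kj j)) \<longlonglongrightarrow> x" and "\<forall>j. Q (kj j)"
      and "\<not> (\<forall>\<^sub>F j in sequentially. inverse (Suc n) \<le> norm (f (Suc (kj j)) - f (kj j)))"
      using assms[of "inverse (Suc n)"] by auto
    moreover have "\<forall>\<^sub>F j in sequentially. norm (f (kj j) - x) < inverse (Suc n)"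
      using tendstoD[OF lim, of "inverse (Suc n)"] by (simp add: dist_norm)
    ultimately obtain j where "norm (f (kj j) - x) < inverse (Suc n)"
      "\<not> inverse (Suc n) \<le> norm (f (Suc (kj j)) - f (kj j))"
      by (metis (mono_tags, lifting) eventually_mono)
    thus ?thesis using \<open>\<forall>j. Q (kj j)\<close> by (intro exI[of _ "kj j"]) auto
  qed
  then obtain K where K: "\<And>n. norm (f (K n) - x) < inverse (Suc n)"
      "\<And>n. norm (f (Suc (K n)) - f (K n)) < inverse (Suc n)" "\<And>n. Q (K n)"
    by metis
  have "(\<lambda>n. f (K n) - x) \<longlonglongrightarrow> 0" and steps: "(\<lambda>n. f (Suc (K n)) - f (K n)) \<longlonglongrightarrow> 0"
    using K(1,2) by (auto intro!: Lim_null_comparison[OF _ LIMSEQ_inverse_real_of_nat]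
        always_eventually less_imp_le)
  hence lim: "(\<lambda>n. f (K n)) \<longlonglongrightarrow> x" by (simp add: LIM_zero_iff)
  have "(\<lambda>n. f (Suc (K n)) - f (K n) + f (K n)) \<longlonglongrightarrow> 0 + x"
    by (intro tendsto_add steps lim)
  with lim show ?thesis using that K(3) by simp
qed

lemma continuous_on_norm_Lipschitz:
  fixes g :: "'a::real_normed_vector \<Rightarrow> 'b::real_normed_vector"
  assumes "\<forall>x\<in>S. \<forall>z\<in>S. norm (g x - g z) \<le> L * norm (x - z)"
  shows "continuous_on S g"
proof (rule lipschitz_on_continuous_on)
  show "(max L 0)-lipschitz_on S g"
  proof (rule lipschitz_onI)
    fix x z assume "x \<in> S" "z \<in> S"
    hence "norm (g x - g z) \<le> L * norm (x - z)" using assms by blast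
    also have "\<dots> \<le> max L 0 * norm (x - z)" by (simp add: mult_right_mono)
    finally show "dist (g x) (g z) \<le> max L 0 * dist x z" by (simp add: dist_norm)
  qed simp
qed

theorem lemma2:
  fixes A :: "real ^ 'n ^ 'm" and y :: "'m \<Rightarrow> nat" and \<beta> \<tau> \<alpha>min :: real
    and pen :: "real ^ 'n \<Rightarrow> real"
    and gF :: "real ^ 'n \<Rightarrow> real ^ 'n"
    and f :: "nat \<Rightarrow> real ^ 'n" and \<alpha> :: "nat \<Rightarrow> real" and fbar :: "real ^ 'n"
  defines "F \<equiv> poissonF A y \<beta>"
  defines "\<rho> \<equiv> (\<lambda>x. ereal (\<tau> * pen x) + delta_plus x)"
  assumes A_nonneg: "\<forall>i j. 0 \<le> A $ i $ j"
    and beta_pos: "\<beta> > 0"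
    and tau_pos: "\<tau> > 0"
    and A1_convex: "convex_on nonneg F"
    and A1_grad: "\<forall>x\<in>nonneg. (F has_derivative (\<lambda>h. inner h (gF x))) (at x within nonneg)"
    and A1_lipschitz: "\<exists>L. \<forall>x\<in>nonneg. \<forall>z\<in>nonneg. norm (gF x - gF z) \<le> L * norm (x - z)"
    and A2_convex: "convex_on nonneg (\<lambda>x. \<tau> * pen x)"
    and A2_cont: "continuous_on nonneg (\<lambda>x. \<tau> * pen x)"
    and amin_pos: "\<alpha>min > 0"
    and f_nonneg: "\<forall>k. f k \<in> nonneg"
    and alpha_pos: "\<forall>k. \<alpha> k > 0"
    and step: "\<forall>k. is_argmin_on_all
        (\<lambda>x. ereal (inner (x - f k) (gF (f k)) + \<alpha> k / 2 * (norm (x - f k))\<^sup>2) + \<rho> x) (f (Suc k))"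
    and fbar_nonneg: "fbar \<in> nonneg"
    and not_critical: "- gF fbar \<notin> subdiff \<rho> fbar"
  shows "\<forall>\<alpha>bar \<ge> \<alpha>min. \<exists>\<epsilon>>0. \<forall>kj :: nat \<Rightarrow> nat.
           (strict_mono kj \<and> ((\<lambda>j. f (kj j)) \<longlonglongrightarrow> fbar) \<and>
            (\<forall>j. f (kj j) \<in> nonneg) \<and> (\<forall>j. \<alpha>min \<le> \<alpha> (kj j) \<and> \<alpha> (kj j) \<le> \<alpha>bar))
           \<longrightarrow> (\<forall>\<^sub>F j in sequentially. norm (f (Suc (kj j)) - f (kj j)) \<ge> \<epsilon>)"
proof (intro allI impI, rule ccontr, goal_cases)
  case (1 \<alpha>bar)
  then have "\<exists>kj. (\<lambda>j. f (kj j)) \<longlonglongrightarrow> fbar \<and> (\<forall>j. \<alpha> (kj j) \<le> \<alpha>bar) \<and>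
      \<not> (\<forall>\<^sub>F j in sequentially. e \<le> norm (f (Suc (kj j)) - f (kj j)))" if "e > 0" for e
    using that by blast
  then obtain K where K: "(\<lambda>n. f (K n)) \<longlonglongrightarrow> fbar" "(\<lambda>n. f (Suc (K n))) \<longlonglongrightarrow> fbar"
      "\<And>n. \<alpha> (K n) \<le> \<alpha>bar"
    using subseq_with_vanishing_steps[of f fbar "\<lambda>k. \<alpha> k \<le> \<alpha>bar"] by blast
  obtain L where "\<forall>x\<in>nonneg. \<forall>z\<in>nonneg. norm (gF x - gF z) \<le> L * norm (x - z)"
    using A1_lipschitz by blast
  hence grad: "(\<lambda>n. gF (f (K n))) \<longlonglongrightarrow> gF fbar"
    using continuous_on_tendsto_compose[OF continuous_on_norm_Lipschitz K(1) fbar_nonneg] f_nonneg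
    by simp
  have steps: "inner (f (Suc k) - f k) (gF (f k)) + \<alpha> k / 2 * (norm (f (Suc k) - f k))\<^sup>2
        + \<tau> * pen (f (Suc k))
      \<le> inner (z - f k) (gF (f k)) + \<alpha> k / 2 * (norm (z - f k))\<^sup>2 + \<tau> * pen z"
    if "z \<in> nonneg" for k z
    using argmin_model_plus_delta_plus_le[OF step[rule_format, unfolded \<rho>_def] f_nonneg[rule_format] that]
    by simp
  have "\<tau> * pen fbar \<le> inner (z - fbar) (gF fbar) + \<alpha>bar / 2 * (norm (z - fbar))\<^sup>2 + \<tau> * pen z"
    if "z \<in> nonneg" for z
    by (rule prox_model_minimizer_limit[OF A2_cont fbar_nonneg _ K(1,2) grad _ K(3) steps that])
      (use alpha_pos f_nonneg in \<open>auto intro: less_imp_le\<close>)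
  hence "- gF fbar \<in> subdiff \<rho> fbar"
    unfolding \<rho>_def
    using amin_pos \<open>\<alpha>min \<le> \<alpha>bar\<close>
    by (intro subdiff_plus_delta_plusI fbar_nonneg
        prox_model_minimizer_imp_subgradient[OF convex_nonneg A2_convex fbar_nonneg, of \<alpha>bar]) auto
  with not_critical show False by contradiction
qed

end
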